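(* For every binary cellular automaton $C=(\{0,1\},\delta)$ with blank symbol $1$ there exist an integer $N$ and a $(2N+2)$-dimensional subtraction game $\mathcal{D}_C$ (finite difference set in $\mathbb{Z}^{2N+2}$ with all vectors of positive coordinate sum) such that $c(t,u)=p(Nt+u,\,Nt-u,\,0,0,\dots,0,1)$ for all integers $t\ge0$ and $u$ with $|u|\le Nt$, where $c(t,u)$ is the content of cell $u$ at time $t$ of $C$ started from the configuration with $c(0,u)=0$ iff $u=0$, and $p(\cdot)$ is the value of a position of $\mathcal{D}_C$.
   Context: Binary cellular automaton with neighborhood size $r$: configurations $c:\mathbb{Z}\to\{0,1\}$, one step maps $c$ to $c'$ with $c'(u)=\delta(c(u-r),\dots,c(u+r))$ for $\delta:\{0,1\}^{2r+1}\to\{0,1\}$; blank symbol $1$ means $\delta(1,\dots,1)=1$. Subtraction game with finite difference set $D\subset\mathbb{Z}^d$: positions $x\in\mathbb{Z}_{\ge0}^d$, move from $x$ to $y\in\mathbb{Z}_{\ge0}^d$ iff $x-y\in D$; normal play. The value of a position is $0$ for a P-position (player to move has no winning strategy) and $1$ for an N-position. *)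

theory Defs
  imports Main
begin

text \<open>Binary cellular automaton with neighbourhood radius r. Symbols 0/1 are
  represented by False/True. A local rule delta is applied to the list
  [c(u-r), ..., c(u+r)].\<close>

definition ca_step :: "nat \<Rightarrow> (bool list \<Rightarrow> bool) \<Rightarrow> (int \<Rightarrow> bool) \<Rightarrow> (int \<Rightarrow> bool)" where
  "ca_step r \<delta> c = (\<lambda>u. \<delta> (map (\<lambda>i. c (u + i)) [- int r..int r]))"

definition ca_config :: "nat \<Rightarrow> (bool list \<Rightarrow> bool) \<Rightarrow> nat \<Rightarrow> int \<Rightarrow> bool" where
  "ca_config r \<delta> t = (ca_step r \<delta> ^^ t) (\<lambda>u. u \<noteq> 0)"

definition vsub :: "int list \<Rightarrow> int list \<Rightarrow> int list" where
  "vsub x d = map2 (-) x d"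

text \<open>The extra guard 0 < sum_list d is automatic for the games considered
  (all difference vectors have positive coordinate sum) and only serves
  to make the recursion well-founded.\<close>
definition legal_move :: "int list set \<Rightarrow> int list \<Rightarrow> int list \<Rightarrow> bool" where
  "legal_move D x d \<longleftrightarrow> d \<in> D \<and> length d = length x \<and> 0 < sum_list d \<and>
      (\<forall>i\<in>set (vsub x d). 0 \<le> i)"

lemma sum_list_vsub:
  "length d = length x \<Longrightarrow> sum_list (vsub x d) = sum_list x - sum_list d"
  unfolding vsub_def
  by (induction x d rule: list_induct2') (auto)

lemma legal_move_dec:
  assumes "legal_move D x d"
  shows "nat (sum_list (vsub x d)) < nat (sum_list x)"
proof -
  have l: "length d = length x" and p: "0 < sum_list d"
    and nn: "\<forall>i\<in>set (vsub x d). 0 \<le> i"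
    using assms unfolding legal_move_def by auto
  have "0 \<le> sum_list (vsub x d)" using nn by (simp add: sum_list_nonneg)
  moreover have "sum_list (vsub x d) = sum_list x - sum_list d"
    using l by (rule sum_list_vsub)
  ultimately show ?thesis using p by simp
qed

function game_value :: "int list set \<Rightarrow> int list \<Rightarrow> nat" where
  "game_value D x =
     (if \<exists>d. (if legal_move D x d then game_value D (vsub x d) = 0 else False)
      then 1 else 0)"
  by pat_completeness auto
termination
  by (relation "measure (\<lambda>(D, x). nat (sum_list x))")
     (auto dest!: legal_move_dec)

declare game_value.simps [simp del]

lemma game_value_eq:
  "game_value D x =
     (if \<exists>d. legal_move D x d \<and> game_value D (vsub x d) = 0 then 1 else 0)"
  by (subst game_value.simps) (smt (verit))

end

theory Submission
  imports Defs "HOL-Library.Countable"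
begin

text \<open>Cell \<open>u\<close> at time \<open>t\<close> is simulated by the cell position \<open>(N t + u, N t - u, 0, \<dots>, 0, 1)\<close>.
  Its only moves guess a neighbourhood \<open>s\<close> with \<open>\<delta> s\<close> and lead to a gate position, which
  records \<open>s\<close> by a marker in the middle coordinates. From the gate the opponent challenges one
  neighbour: where \<open>s\<close> claims a 1 he moves straight to that neighbour's cell position at time
  \<open>t - 1\<close>, where \<open>s\<close> claims a 0 he moves to a negation position, whose only move leads to the
  neighbour's cell position. Hence the gate is a P-position exactly when \<open>s\<close> is the true
  neighbourhood, and by induction on \<open>t\<close> the cell position is an N-position exactly when the cell
  holds 1. A round trip through a gadget lowers the first two coordinates by \<open>N \<mp> i\<close> for the
  offset \<open>i\<close> of the challenged neighbour, so it lands on that neighbour's position; neighbours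
  outside the light cone have no position but are blank, so challenging them never pays.\<close>

definition game_move :: "int list set \<Rightarrow> int list \<Rightarrow> int list \<Rightarrow> bool" where
  "game_move D x y \<longleftrightarrow> (\<exists>d. legal_move D x d \<and> y = vsub x d)"

lemma game_value_eq_of_bool:
  "game_value D x = of_bool (\<exists>y. game_move D x y \<and> game_value D y = 0)"
  by (subst game_value_eq) (auto simp: game_move_def)

definition position :: "nat \<Rightarrow> int \<Rightarrow> int \<Rightarrow> (nat \<Rightarrow> int) \<Rightarrow> int \<Rightarrow> int list" where
  "position L a b f l = [a, b] @ map f [0..<L] @ [l]"

lemma length_position [simp]: "length (position L a b f l) = L + 3"
  by (simp add: position_def)

lemma vsub_position [simp]:
  "vsub (position L a b f l) (position L a' b' f' l') =
     position L (a - a') (b - b') (\<lambda>j. f j - f' j) (l - l')"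
  by (simp add: position_def vsub_def zip_map_map zip_same_conv_map)

lemma position_nonneg_iff [simp]:
  "(\<forall>x\<in>set (position L a b f l). 0 \<le> x) \<longleftrightarrow>
     0 \<le> a \<and> 0 \<le> b \<and> (\<forall>j<L. 0 \<le> f j) \<and> 0 \<le> l"
  by (auto simp: position_def)

lemma sum_list_position: "sum_list (position L a b f l) = a + b + (\<Sum>j<L. f j) + l"
  by (simp add: position_def lessThan_atLeast0 sum_set_upt_conv_sum_list_nat[symmetric])

definition unit_vec :: "nat \<Rightarrow> nat \<Rightarrow> int" where
  "unit_vec g j = (if j = g then 1 else 0)"

lemma sum_unit_vec: "g < L \<Longrightarrow> (\<Sum>j<L. unit_vec g j) = 1"
  by (simp add: unit_vec_def)

definition code_bound :: "nat \<Rightarrow> nat" where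
  "code_bound r = Suc (Max (to_nat ` {s::bool list. length s = 2 * r + 1}))"

definition scale :: "nat \<Rightarrow> nat" where
  "scale r = code_bound r + 2 * r + 2"

definition width :: "nat \<Rightarrow> nat" where
  "width r = 2 * scale r - 1"

text \<open>Gate markers occupy the middle coordinates below \<open>2 * code_bound r\<close>, negation markers
  those above; \<open>to_nat\<close> serves as an arbitrary injective code for neighbourhoods.\<close>

definition gate_index :: "bool list \<Rightarrow> bool \<Rightarrow> nat" where
  "gate_index s c = 2 * to_nat s + of_bool c"

definition neg_index :: "nat \<Rightarrow> nat \<Rightarrow> bool \<Rightarrow> nat" where
  "neg_index r i c = 2 * code_bound r + 2 * i + of_bool c"

text \<open>Moves need a positive coordinate sum, so the guessing move takes 2 from the first two
  coordinates; the bit \<open>c\<close> chooses which one, so that this is possible on the edge of the light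
  cone where one of them is 0. The gadget records \<open>c\<close>, and its exit moves give the 2 back.\<close>

definition cost_a :: "bool \<Rightarrow> int" where
  "cost_a c = (if c then 0 else 2)"

definition cost_b :: "bool \<Rightarrow> int" where
  "cost_b c = (if c then 2 else 0)"

definition offset :: "nat \<Rightarrow> nat \<Rightarrow> int" where
  "offset r i = int i - int r"

definition step_a :: "nat \<Rightarrow> nat \<Rightarrow> bool \<Rightarrow> int" where
  "step_a r i c = int (scale r) - offset r i - cost_a c"

definition step_b :: "nat \<Rightarrow> nat \<Rightarrow> bool \<Rightarrow> int" where
  "step_b r i c = int (scale r) + offset r i - cost_b c"

lemma finite_bool_lists: "finite {s::bool list. length s = n}"
  using finite_lists_length_eq[of "UNIV :: bool set" n] by simp

lemma to_nat_less_code_bound: "length (s::bool list) = 2 * r + 1 \<Longrightarrow> to_nat s < code_bound r"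
  unfolding code_bound_def less_Suc_eq_le
  by (intro Max_ge finite_imageI finite_bool_lists) simp

lemma gate_index_less: "length s = 2 * r + 1 \<Longrightarrow> gate_index s c < 2 * code_bound r"
  using to_nat_less_code_bound[of s r] by (simp add: gate_index_def)

lemma gate_index_less_width: "length s = 2 * r + 1 \<Longrightarrow> gate_index s c < width r"
  using gate_index_less[of s r c] by (simp add: width_def scale_def)

lemma neg_index_less_width: "i < 2 * r + 1 \<Longrightarrow> neg_index r i c < width r"
  by (simp add: neg_index_def width_def scale_def)

lemma gate_index_neq_neg_index: "length s = 2 * r + 1 \<Longrightarrow> gate_index s c \<noteq> neg_index r i c'"
  using gate_index_less[of s r c] by (simp add: neg_index_def)

lemma gate_index_eq_iff: "gate_index s c = gate_index s' c' \<longleftrightarrow> s = s' \<and> c = c'"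
  by (auto simp: gate_index_def of_bool_def split: if_splits; presburger)

lemma neg_index_eq_iff: "neg_index r i c = neg_index r i' c' \<longleftrightarrow> i = i' \<and> c = c'"
  by (auto simp: neg_index_def of_bool_def split: if_splits; presburger)

definition cell_pos :: "nat \<Rightarrow> int \<Rightarrow> int \<Rightarrow> int list" where
  "cell_pos r a b = position (width r) a b (\<lambda>_. 0) 1"

definition gate_pos :: "nat \<Rightarrow> nat \<Rightarrow> int \<Rightarrow> int \<Rightarrow> int list" where
  "gate_pos r g a b = position (width r) a b (\<lambda>j. 2 * unit_vec g j) 0"

definition neg_pos :: "nat \<Rightarrow> nat \<Rightarrow> int \<Rightarrow> int \<Rightarrow> int list" where
  "neg_pos r k a b = position (width r) a b (unit_vec k) 0"

definition cell_gate_move :: "nat \<Rightarrow> bool list \<Rightarrow> bool \<Rightarrow> int list" where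
  "cell_gate_move r s c =
     position (width r) (cost_a c) (cost_b c) (\<lambda>j. - 2 * unit_vec (gate_index s c) j) 1"

definition gate_cell_move :: "nat \<Rightarrow> bool list \<Rightarrow> bool \<Rightarrow> nat \<Rightarrow> int list" where
  "gate_cell_move r s c i =
     position (width r) (step_a r i c) (step_b r i c) (\<lambda>j. 2 * unit_vec (gate_index s c) j) (- 1)"

definition gate_neg_move :: "nat \<Rightarrow> bool list \<Rightarrow> bool \<Rightarrow> nat \<Rightarrow> int list" where
  "gate_neg_move r s c i =
     position (width r) 0 0 (\<lambda>j. 2 * unit_vec (gate_index s c) j - unit_vec (neg_index r i c) j) 0"

definition neg_cell_move :: "nat \<Rightarrow> bool \<Rightarrow> nat \<Rightarrow> int list" where
  "neg_cell_move r c i =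
     position (width r) (step_a r i c) (step_b r i c) (unit_vec (neg_index r i c)) (- 1)"

definition ca_game :: "nat \<Rightarrow> (bool list \<Rightarrow> bool) \<Rightarrow> int list set" where
  "ca_game r \<delta> =
     {cell_gate_move r s c | s c. length s = 2 * r + 1 \<and> \<delta> s} \<union>
     {gate_cell_move r s c i | s c i. length s = 2 * r + 1 \<and> i < 2 * r + 1 \<and> s ! i} \<union>
     {gate_neg_move r s c i | s c i. length s = 2 * r + 1 \<and> i < 2 * r + 1 \<and> \<not> s ! i} \<union>
     {neg_cell_move r c i | c i. i < 2 * r + 1}"

lemma finite_ca_game: "finite (ca_game r \<delta>)"
proof -
  let ?S = "{s::bool list. length s = 2 * r + 1} \<times> (UNIV :: bool set) \<times> {..<2 * r + 1}"
  have fin: "finite ((\<lambda>(s, c, i). f s c i) ` ?S)" for f :: "bool list \<Rightarrow> bool \<Rightarrow> nat \<Rightarrow> int list"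
    by (simp add: finite_bool_lists)
  have "finite {cell_gate_move r s c | s c. length s = 2 * r + 1 \<and> \<delta> s}"
    by (rule finite_subset[OF _ fin]) (auto intro!: image_eqI[where x = "(_, _, 0)"])
  moreover have "finite {gate_cell_move r s c i | s c i. length s = 2 * r + 1 \<and> i < 2 * r + 1 \<and> s ! i}"
    by (rule finite_subset[OF _ fin]) (auto intro!: image_eqI[where x = "(_, _, _)"])
  moreover have "finite {gate_neg_move r s c i | s c i. length s = 2 * r + 1 \<and> i < 2 * r + 1 \<and> \<not> s ! i}"
    by (rule finite_subset[OF _ fin]) (auto intro!: image_eqI[where x = "(_, _, _)"])
  moreover have "finite {neg_cell_move r c i | c i. i < 2 * r + 1}"
    by (rule finite_subset[OF _ fin])
      (auto intro!: image_eqI[where x = "(replicate (2 * r + 1) True, _, _)"])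
  ultimately show ?thesis
    by (simp add: ca_game_def)
qed

lemma ca_game_cases:
  assumes "d \<in> ca_game r \<delta>"
  obtains (cell_gate) s c where "length s = 2 * r + 1" "\<delta> s" "d = cell_gate_move r s c"
  | (gate_cell) s c i where "length s = 2 * r + 1" "i < 2 * r + 1" "s ! i" "d = gate_cell_move r s c i"
  | (gate_neg) s c i where "length s = 2 * r + 1" "i < 2 * r + 1" "\<not> s ! i" "d = gate_neg_move r s c i"
  | (neg_cell) c i where "i < 2 * r + 1" "d = neg_cell_move r c i"
  using assms unfolding ca_game_def by blast

lemma length_ca_game: "d \<in> ca_game r \<delta> \<Longrightarrow> length d = width r + 3"
  by (auto simp: ca_game_def cell_gate_move_def gate_cell_move_def gate_neg_move_def neg_cell_move_def)

lemma sum_list_ca_game_pos: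
  assumes "d \<in> ca_game r \<delta>"
  shows "0 < sum_list d"
  using assms
proof (cases rule: ca_game_cases)
  case (cell_gate s c)
  then show ?thesis
    by (simp add: cell_gate_move_def sum_list_position sum_negf sum_distrib_left[symmetric]
        sum_unit_vec gate_index_less_width cost_a_def cost_b_def)
next
  case (gate_cell s c i)
  then show ?thesis
    by (simp add: gate_cell_move_def sum_list_position sum_distrib_left[symmetric]
        sum_unit_vec gate_index_less_width step_a_def step_b_def cost_a_def cost_b_def scale_def)
next
  case (gate_neg s c i)
  then show ?thesis
    by (simp add: gate_neg_move_def sum_list_position sum_subtractf sum_distrib_left[symmetric]
        sum_unit_vec gate_index_less_width neg_index_less_width)
next
  case (neg_cell c i)
  then show ?thesis
    by (simp add: neg_cell_move_def sum_list_position sum_unit_vec neg_index_less_width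
        step_a_def step_b_def cost_a_def cost_b_def scale_def code_bound_def)
qed

lemma legal_move_ca_game_iff:
  "length x = width r + 3 \<Longrightarrow>
     legal_move (ca_game r \<delta>) x d \<longleftrightarrow> d \<in> ca_game r \<delta> \<and> (\<forall>y\<in>set (vsub x d). 0 \<le> y)"
  by (auto simp: legal_move_def length_ca_game sum_list_ca_game_pos)

lemma vsub_cell_gate_move [simp]:
  "vsub (cell_pos r A B) (cell_gate_move r s c) =
     gate_pos r (gate_index s c) (A - cost_a c) (B - cost_b c)"
  by (simp add: cell_pos_def gate_pos_def cell_gate_move_def)

lemma vsub_gate_cell_move [simp]:
  "vsub (gate_pos r (gate_index s c) A B) (gate_cell_move r s c i) =
     cell_pos r (A - step_a r i c) (B - step_b r i c)"
  by (simp add: cell_pos_def gate_pos_def gate_cell_move_def)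

lemma vsub_gate_neg_move [simp]:
  "vsub (gate_pos r (gate_index s c) A B) (gate_neg_move r s c i) = neg_pos r (neg_index r i c) A B"
  by (simp add: gate_pos_def neg_pos_def gate_neg_move_def)

lemma vsub_neg_cell_move [simp]:
  "vsub (neg_pos r (neg_index r i c) A B) (neg_cell_move r c i) =
     cell_pos r (A - step_a r i c) (B - step_b r i c)"
  by (simp add: cell_pos_def neg_pos_def neg_cell_move_def)

lemma length_cell_pos [simp]: "length (cell_pos r A B) = width r + 3"
  and length_gate_pos [simp]: "length (gate_pos r g A B) = width r + 3"
  and length_neg_pos [simp]: "length (neg_pos r k A B) = width r + 3"
  by (simp_all add: cell_pos_def gate_pos_def neg_pos_def)

lemma cell_pos_nonneg_iff [simp]: "(\<forall>x\<in>set (cell_pos r A B). 0 \<le> x) \<longleftrightarrow> 0 \<le> A \<and> 0 \<le> B"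
  by (simp add: cell_pos_def)

lemma gate_pos_nonneg_iff [simp]: "(\<forall>x\<in>set (gate_pos r g A B). 0 \<le> x) \<longleftrightarrow> 0 \<le> A \<and> 0 \<le> B"
  by (simp add: gate_pos_def unit_vec_def)

lemma neg_pos_nonneg_iff [simp]: "(\<forall>x\<in>set (neg_pos r k A B). 0 \<le> x) \<longleftrightarrow> 0 \<le> A \<and> 0 \<le> B"
  by (simp add: neg_pos_def unit_vec_def)

lemma nonneg_vsub_position_le:
  assumes "\<forall>x\<in>set (vsub (position L a b f l) (position L a' b' f' l')). 0 \<le> x" and "j < L"
  shows "f' j \<le> f j"
  using assms by simp

lemma game_move_ca_gameE:
  assumes "game_move (ca_game r \<delta>) x y" and "length x = width r + 3"
  obtains d where "d \<in> ca_game r \<delta>" "\<forall>z\<in>set (vsub x d). 0 \<le> z" "y = vsub x d"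
  using assms by (auto simp: game_move_def legal_move_ca_game_iff)

lemma game_move_ca_gameI:
  "d \<in> ca_game r \<delta> \<Longrightarrow> length x = width r + 3 \<Longrightarrow> \<forall>z\<in>set (vsub x d). 0 \<le> z \<Longrightarrow>
     game_move (ca_game r \<delta>) x (vsub x d)"
  by (auto simp: game_move_def legal_move_ca_game_iff)

lemma cell_pos_legal_moveE:
  assumes "d \<in> ca_game r \<delta>" and nonneg: "\<forall>z\<in>set (vsub (cell_pos r A B) d). 0 \<le> z"
  obtains s c where "length s = 2 * r + 1" "\<delta> s" "d = cell_gate_move r s c"
  using assms(1)
proof (cases rule: ca_game_cases)
  case (cell_gate s c)
  then show ?thesis
    by (rule that)
next
  case (gate_cell s c i)
  then show ?thesis
    using nonneg_vsub_position_le[OF nonneg[unfolded gate_cell(4) cell_pos_def gate_cell_move_def]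
        gate_index_less_width[OF gate_cell(1), of c]] by (simp add: unit_vec_def)
next
  case (gate_neg s c i)
  then show ?thesis
    using nonneg_vsub_position_le[OF nonneg[unfolded gate_neg(4) cell_pos_def gate_neg_move_def]
        gate_index_less_width[OF gate_neg(1), of c]] by (simp add: unit_vec_def gate_index_neq_neg_index)
next
  case (neg_cell c i)
  then show ?thesis
    using nonneg_vsub_position_le[OF nonneg[unfolded neg_cell(2) cell_pos_def neg_cell_move_def]
        neg_index_less_width[OF neg_cell(1), of c]] by (simp add: unit_vec_def)
qed

lemma neg_pos_legal_moveE:
  assumes "d \<in> ca_game r \<delta>" and nonneg: "\<forall>z\<in>set (vsub (neg_pos r (neg_index r i c) A B) d). 0 \<le> z"
  obtains "d = neg_cell_move r c i"
  using assms(1)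
proof (cases rule: ca_game_cases)
  case (cell_gate s' c')
  then show ?thesis
    using nonneg by (simp add: neg_pos_def cell_gate_move_def)
next
  case (gate_cell s' c' i')
  then show ?thesis
    using nonneg_vsub_position_le[OF nonneg[unfolded gate_cell(4) neg_pos_def gate_cell_move_def]
        gate_index_less_width[OF gate_cell(1), of c']]
    by (simp add: unit_vec_def gate_index_neq_neg_index)
next
  case (gate_neg s' c' i')
  then show ?thesis
    using nonneg_vsub_position_le[OF nonneg[unfolded gate_neg(4) neg_pos_def gate_neg_move_def]
        gate_index_less_width[OF gate_neg(1), of c']]
    by (simp add: unit_vec_def gate_index_neq_neg_index)
next
  case (neg_cell c' i')
  have "neg_index r i' c' = neg_index r i c"
    using nonneg_vsub_position_le[OF nonneg[unfolded neg_cell(2) neg_pos_def neg_cell_move_def]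
        neg_index_less_width[OF neg_cell(1), of c']]
    by (auto simp: unit_vec_def split: if_splits)
  then show ?thesis
    using neg_cell that by (simp add: neg_index_eq_iff)
qed

lemma gate_pos_legal_moveE:
  assumes "d \<in> ca_game r \<delta>" and s: "length s = 2 * r + 1"
    and nonneg: "\<forall>z\<in>set (vsub (gate_pos r (gate_index s c) A B) d). 0 \<le> z"
  obtains i where "i < 2 * r + 1" "s ! i" "d = gate_cell_move r s c i"
  | i where "i < 2 * r + 1" "\<not> s ! i" "d = gate_neg_move r s c i"
  using assms(1)
proof (cases rule: ca_game_cases)
  case (cell_gate s' c')
  then show ?thesis
    using nonneg by (simp add: gate_pos_def cell_gate_move_def)
next
  case (gate_cell s' c' i)
  have "gate_index s' c' = gate_index s c"
    using nonneg_vsub_position_le[OF nonneg[unfolded gate_cell(4) gate_pos_def gate_cell_move_def]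
        gate_index_less_width[OF gate_cell(1), of c']]
    by (auto simp: unit_vec_def split: if_splits)
  then show ?thesis
    using gate_cell that(1) by (simp add: gate_index_eq_iff)
next
  case (gate_neg s' c' i)
  have "gate_index s' c' = gate_index s c"
    using nonneg_vsub_position_le[OF nonneg[unfolded gate_neg(4) gate_pos_def gate_neg_move_def]
        gate_index_less_width[OF gate_neg(1), of c']]
    by (auto simp: unit_vec_def gate_index_neq_neg_index[OF gate_neg(1)] split: if_splits)
  then show ?thesis
    using gate_neg that(2) by (simp add: gate_index_eq_iff)
next
  case (neg_cell c' i)
  then show ?thesis
    using nonneg_vsub_position_le[OF nonneg[unfolded neg_cell(2) gate_pos_def neg_cell_move_def]
        neg_index_less_width[OF neg_cell(1), of c']]
    by (simp add: unit_vec_def gate_index_neq_neg_index[OF s, THEN not_sym])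
qed

lemma game_move_cell_pos_iff:
  "game_move (ca_game r \<delta>) (cell_pos r A B) y \<longleftrightarrow>
     (\<exists>s c. length s = 2 * r + 1 \<and> \<delta> s \<and> cost_a c \<le> A \<and> cost_b c \<le> B \<and>
        y = gate_pos r (gate_index s c) (A - cost_a c) (B - cost_b c))"
proof
  assume "game_move (ca_game r \<delta>) (cell_pos r A B) y"
  then obtain d where d: "d \<in> ca_game r \<delta>" and nonneg: "\<forall>z\<in>set (vsub (cell_pos r A B) d). 0 \<le> z"
    and y: "y = vsub (cell_pos r A B) d"
    by (rule game_move_ca_gameE) simp
  from d nonneg obtain s c where "length s = 2 * r + 1" "\<delta> s" "d = cell_gate_move r s c"
    by (rule cell_pos_legal_moveE)
  then show "\<exists>s c. length s = 2 * r + 1 \<and> \<delta> s \<and> cost_a c \<le> A \<and> cost_b c \<le> B \<and>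
      y = gate_pos r (gate_index s c) (A - cost_a c) (B - cost_b c)"
    using nonneg y by auto
next
  assume "\<exists>s c. length s = 2 * r + 1 \<and> \<delta> s \<and> cost_a c \<le> A \<and> cost_b c \<le> B \<and>
      y = gate_pos r (gate_index s c) (A - cost_a c) (B - cost_b c)"
  then obtain s c where "length s = 2 * r + 1" "\<delta> s" "cost_a c \<le> A" "cost_b c \<le> B"
    and y: "y = vsub (cell_pos r A B) (cell_gate_move r s c)"
    by auto
  have "cell_gate_move r s c \<in> ca_game r \<delta>"
    using \<open>length s = 2 * r + 1\<close> \<open>\<delta> s\<close> by (auto simp: ca_game_def)
  then show "game_move (ca_game r \<delta>) (cell_pos r A B) y"
    unfolding y using \<open>cost_a c \<le> A\<close> \<open>cost_b c \<le> B\<close> by (intro game_move_ca_gameI) auto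
qed

lemma game_move_neg_pos_iff:
  assumes "i < 2 * r + 1"
  shows "game_move (ca_game r \<delta>) (neg_pos r (neg_index r i c) A B) y \<longleftrightarrow>
     step_a r i c \<le> A \<and> step_b r i c \<le> B \<and> y = cell_pos r (A - step_a r i c) (B - step_b r i c)"
proof
  let ?x = "neg_pos r (neg_index r i c) A B"
  assume "game_move (ca_game r \<delta>) ?x y"
  then obtain d where d: "d \<in> ca_game r \<delta>" and nonneg: "\<forall>z\<in>set (vsub ?x d). 0 \<le> z"
    and y: "y = vsub ?x d"
    by (rule game_move_ca_gameE) simp
  from d nonneg have "d = neg_cell_move r c i"
    by (rule neg_pos_legal_moveE)
  then show "step_a r i c \<le> A \<and> step_b r i c \<le> B \<and> y = cell_pos r (A - step_a r i c) (B - step_b r i c)"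
    using nonneg y by simp
next
  assume step: "step_a r i c \<le> A \<and> step_b r i c \<le> B \<and> y = cell_pos r (A - step_a r i c) (B - step_b r i c)"
  have "neg_cell_move r c i \<in> ca_game r \<delta>"
    using assms by (auto simp: ca_game_def)
  then show "game_move (ca_game r \<delta>) (neg_pos r (neg_index r i c) A B) y"
    using step game_move_ca_gameI[of "neg_cell_move r c i" r \<delta> "neg_pos r (neg_index r i c) A B"] by simp
qed

lemma game_move_gate_pos_iff:
  assumes "length s = 2 * r + 1" and "0 \<le> A" and "0 \<le> B"
  shows "game_move (ca_game r \<delta>) (gate_pos r (gate_index s c) A B) y \<longleftrightarrow>
     (\<exists>i<2 * r + 1. if s ! i
        then step_a r i c \<le> A \<and> step_b r i c \<le> B \<and> y = cell_pos r (A - step_a r i c) (B - step_b r i c)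
        else y = neg_pos r (neg_index r i c) A B)"
    (is "_ \<longleftrightarrow> (\<exists>i<2 * r + 1. ?move i)")
proof
  let ?x = "gate_pos r (gate_index s c) A B"
  assume "game_move (ca_game r \<delta>) ?x y"
  then obtain d where d: "d \<in> ca_game r \<delta>" and nonneg: "\<forall>z\<in>set (vsub ?x d). 0 \<le> z"
    and y: "y = vsub ?x d"
    by (rule game_move_ca_gameE) simp
  from d assms(1) nonneg show "\<exists>i<2 * r + 1. ?move i"
    by (rule gate_pos_legal_moveE) (use nonneg y in auto)
next
  assume "\<exists>i<2 * r + 1. ?move i"
  then obtain i where i: "i < 2 * r + 1" and move: "?move i"
    by blast
  show "game_move (ca_game r \<delta>) (gate_pos r (gate_index s c) A B) y"
  proof (cases "s ! i")
    case True
    then have "gate_cell_move r s c i \<in> ca_game r \<delta>"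
      using assms(1) i by (auto simp: ca_game_def)
    then show ?thesis
      using move True game_move_ca_gameI[of "gate_cell_move r s c i" r \<delta> "gate_pos r (gate_index s c) A B"]
      by simp
  next
    case False
    then have "gate_neg_move r s c i \<in> ca_game r \<delta>"
      using assms(1) i by (auto simp: ca_game_def)
    then show ?thesis
      using move False assms
        game_move_ca_gameI[of "gate_neg_move r s c i" r \<delta> "gate_pos r (gate_index s c) A B"]
      by simp
  qed
qed

lemma game_value_cell_pos:
  "game_value (ca_game r \<delta>) (cell_pos r A B) =
     of_bool (\<exists>s c. length s = 2 * r + 1 \<and> \<delta> s \<and> cost_a c \<le> A \<and> cost_b c \<le> B \<and>
       game_value (ca_game r \<delta>) (gate_pos r (gate_index s c) (A - cost_a c) (B - cost_b c)) = 0)"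
  unfolding game_value_eq_of_bool[of _ "cell_pos r A B"] game_move_cell_pos_iff
  by (intro arg_cong[where f = of_bool]) metis

lemma game_value_neg_pos:
  "i < 2 * r + 1 \<Longrightarrow>
   game_value (ca_game r \<delta>) (neg_pos r (neg_index r i c) A B) =
     of_bool (step_a r i c \<le> A \<and> step_b r i c \<le> B \<and>
       game_value (ca_game r \<delta>) (cell_pos r (A - step_a r i c) (B - step_b r i c)) = 0)"
  unfolding game_value_eq_of_bool[of _ "neg_pos r (neg_index r i c) A B"]
  by (intro arg_cong[where f = of_bool]) (simp add: game_move_neg_pos_iff)

lemma game_value_gate_pos:
  assumes "length s = 2 * r + 1" and "0 \<le> A" and "0 \<le> B"
  shows "game_value (ca_game r \<delta>) (gate_pos r (gate_index s c) A B) =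
     of_bool (\<exists>i<2 * r + 1. if s ! i
       then step_a r i c \<le> A \<and> step_b r i c \<le> B \<and>
         game_value (ca_game r \<delta>) (cell_pos r (A - step_a r i c) (B - step_b r i c)) = 0
       else game_value (ca_game r \<delta>) (neg_pos r (neg_index r i c) A B) = 0)"
  unfolding game_value_eq_of_bool[of _ "gate_pos r (gate_index s c) A B"]
    game_move_gate_pos_iff[OF assms]
  by (intro arg_cong[where f = of_bool]) metis

lemma upto_eq_map_offset: "[- int r..int r] = map (offset r) [0..<2 * r + 1]"
proof (rule nth_equalityI)
  fix k
  assume "k < length [- int r..int r]"
  then show "[- int r..int r] ! k = map (offset r) [0..<2 * r + 1] ! k"
    by (simp add: nth_upto offset_def del: upt_Suc)
qed simp

definition neighbourhood :: "nat \<Rightarrow> (bool list \<Rightarrow> bool) \<Rightarrow> nat \<Rightarrow> int \<Rightarrow> bool list" where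
  "neighbourhood r \<delta> t u = map (\<lambda>i. ca_config r \<delta> t (u + offset r i)) [0..<2 * r + 1]"

lemma length_neighbourhood: "length (neighbourhood r \<delta> t u) = 2 * r + 1"
  by (simp add: neighbourhood_def)

lemma ca_config_Suc: "ca_config r \<delta> (Suc t) u = \<delta> (neighbourhood r \<delta> t u)"
  by (simp add: ca_config_def ca_step_def neighbourhood_def upto_eq_map_offset comp_def del: upt_Suc)

lemma ca_config_outside_light_cone:
  assumes blank: "\<delta> (replicate (2 * r + 1) True)" and "int r * int t < \<bar>u\<bar>"
  shows "ca_config r \<delta> t u"
  using assms(2)
proof (induction t arbitrary: u)
  case 0
  then show ?case
    by (simp add: ca_config_def)
next
  case (Suc t)
  have "ca_config r \<delta> t (u + offset r i)" if "i < 2 * r + 1" for i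
  proof (rule Suc.IH)
    have "\<bar>offset r i\<bar> \<le> int r"
      using that by (simp add: offset_def)
    then show "int r * int t < \<bar>u + offset r i\<bar>"
      using Suc.prems by (simp add: algebra_simps)
  qed
  then have "neighbourhood r \<delta> t u = replicate (2 * r + 1) True"
    by (simp add: neighbourhood_def list_eq_iff_nth_eq del: upt_Suc replicate_Suc)
  then show ?case
    using blank by (simp add: ca_config_Suc)
qed

lemma game_value_gate_pos_eq_0_iff:
  assumes s: "length s = 2 * r + 1" and w: "length w = 2 * r + 1" and "0 \<le> A" "0 \<le> B"
    and challenge: "\<And>i. i < 2 * r + 1 \<Longrightarrow>
      (step_a r i c \<le> A \<and> step_b r i c \<le> B \<and>
        game_value (ca_game r \<delta>) (cell_pos r (A - step_a r i c) (B - step_b r i c)) = 0) \<longleftrightarrow>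
      \<not> w ! i"
  shows "game_value (ca_game r \<delta>) (gate_pos r (gate_index s c) A B) = 0 \<longleftrightarrow> s = w"
proof -
  let ?G = "game_value (ca_game r \<delta>)"
  have "(if s ! i
      then step_a r i c \<le> A \<and> step_b r i c \<le> B \<and>
        ?G (cell_pos r (A - step_a r i c) (B - step_b r i c)) = 0
      else ?G (neg_pos r (neg_index r i c) A B) = 0) \<longleftrightarrow> s ! i \<noteq> w ! i"
    if "i < 2 * r + 1" for i
    using challenge[OF that] by (simp add: game_value_neg_pos[OF that])
  then have "?G (gate_pos r (gate_index s c) A B) = of_bool (\<exists>i<2 * r + 1. s ! i \<noteq> w ! i)"
    by (simp only: game_value_gate_pos[OF s \<open>0 \<le> A\<close> \<open>0 \<le> B\<close>])
      (intro arg_cong[where f = of_bool]; blast)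
  also have "\<dots> = 0 \<longleftrightarrow> s = w"
    using s w by (auto simp: list_eq_iff_nth_eq)
  finally show ?thesis .
qed

lemma cost_exists:
  assumes "0 \<le> A" "0 \<le> B" "2 \<le> A \<or> 2 \<le> B"
  obtains c where "cost_a c \<le> A" "cost_b c \<le> B"
  using assms that by (metis cost_a_def cost_b_def)

definition cell_at :: "nat \<Rightarrow> nat \<Rightarrow> int \<Rightarrow> int list" where
  "cell_at r t u = cell_pos r (int (scale r) * int t + u) (int (scale r) * int t - u)"

lemma cell_at_losing_iff:
  assumes blank: "\<delta> (replicate (2 * r + 1) True)"
    and IH: "\<And>v. \<bar>v\<bar> \<le> int (scale r) * int t \<Longrightarrow>
      game_value (ca_game r \<delta>) (cell_at r t v) = of_bool (ca_config r \<delta> t v)"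
  shows "(\<bar>v\<bar> \<le> int (scale r) * int t \<and> game_value (ca_game r \<delta>) (cell_at r t v) = 0) \<longleftrightarrow>
    \<not> ca_config r \<delta> t v"
proof (cases "\<bar>v\<bar> \<le> int (scale r) * int t")
  case True
  then show ?thesis
    using IH[of v] by simp
next
  case False
  have "int r * int t \<le> int (scale r) * int t"
    by (intro mult_right_mono) (auto simp: scale_def)
  then have "ca_config r \<delta> t v"
    using False by (intro ca_config_outside_light_cone[of \<delta> r, OF blank]) simp
  then show ?thesis
    using False by simp
qed

lemma game_value_cell_at_Suc:
  assumes blank: "\<delta> (replicate (2 * r + 1) True)"
    and IH: "\<And>v. \<bar>v\<bar> \<le> int (scale r) * int t \<Longrightarrow>
      game_value (ca_game r \<delta>) (cell_at r t v) = of_bool (ca_config r \<delta> t v)"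
    and u: "\<bar>u\<bar> \<le> int (scale r) * int (Suc t)"
  shows "game_value (ca_game r \<delta>) (cell_at r (Suc t) u) = of_bool (ca_config r \<delta> (Suc t) u)"
proof -
  let ?G = "game_value (ca_game r \<delta>)"
  define N where "N = int (scale r)"
  define A where "A = N * int (Suc t) + u"
  define B where "B = N * int (Suc t) - u"
  have "2 \<le> N" "N \<le> N * int (Suc t)"
    by (simp_all add: N_def scale_def)
  moreover have "- (N * int (Suc t)) \<le> u" "u \<le> N * int (Suc t)"
    using u by (auto simp: N_def)
  ultimately have "0 \<le> A" "0 \<le> B" "2 \<le> A \<or> 2 \<le> B"
    unfolding A_def B_def by linarith+
  then obtain c where c: "cost_a c \<le> A" "cost_b c \<le> B"
    by (rule cost_exists)
  have gate_losing_iff: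
    "?G (gate_pos r (gate_index s c) (A - cost_a c) (B - cost_b c)) = 0 \<longleftrightarrow>
     s = neighbourhood r \<delta> t u"
    if s: "length s = 2 * r + 1" and c: "cost_a c \<le> A" "cost_b c \<le> B" for s c
  proof (rule game_value_gate_pos_eq_0_iff[OF s length_neighbourhood])
    fix i
    assume i: "i < 2 * r + 1"
    have "A - cost_a c - step_a r i c = N * int t + (u + offset r i)"
      and "B - cost_b c - step_b r i c = N * int t - (u + offset r i)"
      by (simp_all add: A_def B_def N_def step_a_def step_b_def algebra_simps)
    then show "(step_a r i c \<le> A - cost_a c \<and> step_b r i c \<le> B - cost_b c \<and>
        ?G (cell_pos r (A - cost_a c - step_a r i c) (B - cost_b c - step_b r i c)) = 0) \<longleftrightarrow>
      \<not> neighbourhood r \<delta> t u ! i"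
      using cell_at_losing_iff[of \<delta> r t "u + offset r i", OF blank IH] i
      by (simp add: cell_at_def N_def neighbourhood_def abs_le_iff del: upt_Suc) linarith
  qed (use c in simp_all)
  have "?G (cell_pos r A B) = of_bool (\<delta> (neighbourhood r \<delta> t u))"
    unfolding game_value_cell_pos using c gate_losing_iff length_neighbourhood
    by (intro arg_cong[where f = of_bool]) blast
  then show ?thesis
    by (simp add: cell_at_def A_def B_def N_def ca_config_Suc)
qed

lemma game_value_cell_at:
  assumes blank: "\<delta> (replicate (2 * r + 1) True)" and "\<bar>u\<bar> \<le> int (scale r) * int t"
  shows "game_value (ca_game r \<delta>) (cell_at r t u) = of_bool (ca_config r \<delta> t u)"
  using assms(2)
proof (induction t arbitrary: u)
  case 0
  then show ?case
    by (simp add: game_value_cell_pos cell_at_def ca_config_def cost_a_def cost_b_def)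
next
  case (Suc t)
  then show ?case
    using game_value_cell_at_Suc[of \<delta> r, OF blank] by blast
qed

lemma cell_at_eq:
  "cell_at r t u = [int (scale r) * int t + u, int (scale r) * int t - u] @
     replicate (2 * scale r - 1) 0 @ [1]"
  by (simp add: cell_at_def cell_pos_def position_def width_def map_replicate_const)

theorem corollary1:
  fixes r :: nat and \<delta> :: "bool list \<Rightarrow> bool"
  assumes "\<delta> (replicate (2 * r + 1) True) = True"
  shows "\<exists>N::nat. 1 \<le> N \<and>
    (\<exists>D :: int list set. finite D \<and>
       (\<forall>d\<in>D. length d = 2 * N + 2 \<and> 0 < sum_list d) \<and>
       (\<forall>(t::nat) (u::int). \<bar>u\<bar> \<le> int N * int t \<longrightarrow>
          of_bool (ca_config r \<delta> t u) =
          game_value D ([int N * int t + u, int N * int t - u] @ replicate (2 * N - 1) 0 @ [1])))"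
proof (intro exI conjI allI impI ballI)
  show "1 \<le> scale r"
    by (simp add: scale_def)
  show "finite (ca_game r \<delta>)"
    by (rule finite_ca_game)
  fix d
  assume "d \<in> ca_game r \<delta>"
  then show "length d = 2 * scale r + 2" and "0 < sum_list d"
    by (simp_all add: length_ca_game sum_list_ca_game_pos width_def scale_def)
next
  fix t u
  assume "\<bar>u\<bar> \<le> int (scale r) * int t"
  then show "of_bool (ca_config r \<delta> t u) = game_value (ca_game r \<delta>)
      ([int (scale r) * int t + u, int (scale r) * int t - u] @ replicate (2 * scale r - 1) 0 @ [1])"
    using game_value_cell_at[of \<delta> r] assms by (simp add: cell_at_eq)
qed

end
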